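(* For $T\in D(\nu)$, let $S_T$ be the set of all $\lambda_1\in\mathcal P$ such that $T\in\underline{\mathrm{CLR}}^{\lambda(\lambda_1)}_{\alpha(\lambda_1),\nu}$. Then $S_T=\lambda_{\min}(T)+\mathcal P=\{\lambda_{\min}(T)+\delta:\delta\in\mathcal P\}$.
   Context: Identify a partition $\lambda=(a_1\ge a_2\ge\cdots)$ with $\sum_ja_j\epsilon_j$ in $\Lambda=\bigoplus_{j\ge1}\mathbb Z\epsilon_j$; put $\omega_i=\epsilon_1+\dots+\epsilon_i$; partitions are exactly elements with all $\omega$-coordinates $\ge0$, and addition of partitions is addition in $\Lambda$. For $x,y\in\Lambda$, $y\le x$ means $x-y$ has all $\omega$-coordinates $\ge0$. $\mathcal P$ = partitions, $\mathcal P^k$ = $k$-tuples. $SST(\nu)$ = semistandard tableaux of shape $\nu$ with entries in $\mathbb Z_{>0}$, with the standard $\mathfrak{gl}_\infty$-crystal structure. For $T\in SST(\nu)$: $\mathrm{wt}(T)=\sum_j(\#\text{entries }j)\epsilon_j$, $\varepsilon_i(T)=\max\{m\ge0:\tilde e_i^mT\ne0\}$, $\varepsilon(T)=\sum_i\varepsilon_i(T)\omega_i$. $\mathrm{CLR}^\lambda_{\alpha,\nu}=\{T\in SST(\nu):\varepsilon(T)\le\alpha,\ \alpha+\mathrm{wt}(T)=\lambda\}$. Fix $k\ge1$, partitions $\nu=(\nu_1^+,\nu_1^-,\dots,\nu_k^+,\nu_k^-)$; indices cyclic mod $k$ ($\lambda_0:=\lambda_k$). $\underline{SST}(\nu)=\prod_iSST(\nu_i^+)\times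 SST(\nu_i^-)$, $T=(T_1^+,T_1^-,\dots,T_k^+,T_k^-)$, $\mathrm{wt}(T_i)=\mathrm{wt}(T_i^+)-\mathrm{wt}(T_i^-)$. $\underline{\mathrm{CLR}}^\lambda_{\alpha,\nu}=\prod_{i=1}^k\mathrm{CLR}^{\lambda_i}_{\alpha_i,\nu_i^+}\times\mathrm{CLR}^{\lambda_{i-1}}_{\alpha_i,\nu_i^-}$. $D(\nu)$ = set of $T$ lying in some $\underline{\mathrm{CLR}}^\lambda_{\alpha,\nu}$ with $\lambda,\alpha\in\mathcal P^k$. For $\lambda_1\in\mathcal P$: $\lambda(\lambda_1)=(\lambda_i)_i$ with $\lambda_i=\lambda_1+\sum_{j=2}^i\mathrm{wt}(T_j)$, $\alpha(\lambda_1)=(\alpha_i)_i$ with $\alpha_i=\lambda_1-\mathrm{wt}(T_i^+)+\sum_{j=2}^i\mathrm{wt}(T_j)$. $\lambda_{\min}(T)$ is the coordinatewise (in $\omega$-coordinates) maximum of $S_i^\pm=\varepsilon(T_i^\pm)+\mathrm{wt}(T_i^+)-\sum_{j=2}^i\mathrm{wt}(T_j)$, $i=1,\dots,k$; it is a partition. *)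

theory Defs
  imports Main
begin

text \<open>Elements of Lambda = direct sum of Z eps_j (j >= 1) are finitely supported
  functions nat => int; the value at index k is the coefficient of eps_(k+1)
  (0-based indexing).  Likewise the omega-coordinate at index k is the
  coefficient of omega_(k+1).\<close>

type_synonym lam = "nat \<Rightarrow> int"

definition finsupp :: "lam \<Rightarrow> bool" where
  "finsupp x \<longleftrightarrow> finite {j. x j \<noteq> 0}"

text \<open>omega-coordinate: x = sum_i c_i omega_i with c_i = a_i - a_(i+1).\<close>
definition omc :: "lam \<Rightarrow> nat \<Rightarrow> int" where
  "omc x i = x i - x (Suc i)"

definition from_omc :: "(nat \<Rightarrow> int) \<Rightarrow> lam" where
  "from_omc c j = (\<Sum>i\<in>{i. j \<le> i \<and> c i \<noteq> 0}. c i)"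

definition is_partition :: "lam \<Rightarrow> bool" where
  "is_partition x \<longleftrightarrow> finsupp x \<and> (\<forall>i. 0 \<le> omc x i)"

definition partitions :: "lam set" where
  "partitions = {x. is_partition x}"

definition lam_le :: "lam \<Rightarrow> lam \<Rightarrow> bool" where
  "lam_le y x \<longleftrightarrow> (\<forall>i. omc y i \<le> omc x i)"

text \<open>A tableau of shape nu: a map from cells (row, column), both 0-based, to
  entries; cells are (r,c) with c < nu_r; entries are positive integers in the
  cells and 0 outside.\<close>

type_synonym tab = "nat \<times> nat \<Rightarrow> nat"

definition in_shape :: "lam \<Rightarrow> nat \<times> nat \<Rightarrow> bool" where
  "in_shape nu p \<longleftrightarrow> int (snd p) < nu (fst p)"

definition SST :: "lam \<Rightarrow> tab set" where
  "SST nu = {T. (\<forall>p. in_shape nu p \<longrightarrow> 0 < T p)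
      \<and> (\<forall>p. \<not> in_shape nu p \<longrightarrow> T p = 0)
      \<and> (\<forall>r c c'. in_shape nu (r, c') \<longrightarrow> c < c' \<longrightarrow> T (r, c) \<le> T (r, c'))
      \<and> (\<forall>r r' c. in_shape nu (r', c) \<longrightarrow> r < r' \<longrightarrow> T (r, c) < T (r', c))}"

text \<open>wt(T) = sum_j (number of entries j) eps_j; index k stands for entry k+1.\<close>
definition wt :: "tab \<Rightarrow> lam" where
  "wt T k = int (card {p. T p = Suc k})"

definition nrows :: "lam \<Rightarrow> nat" where
  "nrows nu = (LEAST n. \<forall>r\<ge>n. nu r \<le> 0)"

definition read_cells :: "lam \<Rightarrow> (nat \<times> nat) list" where
  "read_cells nu = concat (map (\<lambda>r. map (\<lambda>c. (r, c)) [0..<nat (nu r)]) (rev [0..<nrows nu]))"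

text \<open>Signature rule: scanning the reading word left to right, each letter i+1
  is pushed on a stack and each letter i cancels the most recent uncancelled
  letter i+1.  The result is the stack of unmatched letters i+1 (most recent
  first).\<close>
primrec unm :: "nat \<Rightarrow> tab \<Rightarrow> (nat \<times> nat) list \<Rightarrow> (nat \<times> nat) list \<Rightarrow> (nat \<times> nat) list" where
  "unm i T [] st = st"
| "unm i T (p # ps) st =
     (if T p = Suc i then unm i T ps (p # st)
      else if T p = i then unm i T ps (drop 1 st)
      else unm i T ps st)"

text \<open>Kashiwara operator e_i (i >= 1): change the leftmost unmatched i+1 into i;
  None represents 0.\<close>
definition e_op :: "lam \<Rightarrow> nat \<Rightarrow> tab \<Rightarrow> tab option" where
  "e_op nu i T = (let st = unm i T (read_cells nu) [] in
     if st = [] then None else Some (T(last st := i)))"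

fun e_pow :: "lam \<Rightarrow> nat \<Rightarrow> nat \<Rightarrow> tab \<Rightarrow> tab option" where
  "e_pow nu i 0 T = Some T"
| "e_pow nu i (Suc m) T = Option.bind (e_pow nu i m T) (e_op nu i)"

definition eps_i :: "lam \<Rightarrow> nat \<Rightarrow> tab \<Rightarrow> nat" where
  "eps_i nu i T = (GREATEST m. e_pow nu i m T \<noteq> None)"

text \<open>epsilon(T) = sum_(i>=1) epsilon_i(T) omega_i; omega-index k stands for omega_(k+1).\<close>
definition eps_vec :: "lam \<Rightarrow> tab \<Rightarrow> lam" where
  "eps_vec nu T = from_omc (\<lambda>k. int (eps_i nu (Suc k) T))"

definition CLR :: "lam \<Rightarrow> lam \<Rightarrow> lam \<Rightarrow> tab set" where
  "CLR lambda alpha nu = {T \<in> SST nu. lam_le (eps_vec nu T) alpha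
       \<and> (\<lambda>j. alpha j + wt T j) = lambda}"

definition prv :: "nat \<Rightarrow> nat \<Rightarrow> nat" where
  "prv k i = (if i = 1 then k else i - 1)"

definition in_CLR_tuple :: "nat \<Rightarrow> (nat \<Rightarrow> lam) \<Rightarrow> (nat \<Rightarrow> lam)
    \<Rightarrow> (nat \<Rightarrow> lam) \<Rightarrow> (nat \<Rightarrow> lam) \<Rightarrow> (nat \<Rightarrow> tab) \<Rightarrow> (nat \<Rightarrow> tab) \<Rightarrow> bool" where
  "in_CLR_tuple k lambda alpha nup num Tp Tm \<longleftrightarrow>
     (\<forall>i\<in>{1..k}. Tp i \<in> CLR (lambda i) (alpha i) (nup i)
               \<and> Tm i \<in> CLR (lambda (prv k i)) (alpha i) (num i))"

definition in_D :: "nat \<Rightarrow> (nat \<Rightarrow> lam) \<Rightarrow> (nat \<Rightarrow> lam) \<Rightarrow> (nat \<Rightarrow> tab) \<Rightarrow> (nat \<Rightarrow> tab) \<Rightarrow> bool" where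
  "in_D k nup num Tp Tm \<longleftrightarrow>
     (\<exists>lambda alpha. (\<forall>i\<in>{1..k}. is_partition (lambda i) \<and> is_partition (alpha i))
        \<and> in_CLR_tuple k lambda alpha nup num Tp Tm)"

definition wtT :: "(nat \<Rightarrow> tab) \<Rightarrow> (nat \<Rightarrow> tab) \<Rightarrow> nat \<Rightarrow> lam" where
  "wtT Tp Tm i = (\<lambda>j. wt (Tp i) j - wt (Tm i) j)"

definition wtsum :: "(nat \<Rightarrow> tab) \<Rightarrow> (nat \<Rightarrow> tab) \<Rightarrow> nat \<Rightarrow> lam" where
  "wtsum Tp Tm i = (\<lambda>j. \<Sum>l\<in>{2..i}. wtT Tp Tm l j)"

definition lam_of :: "(nat \<Rightarrow> tab) \<Rightarrow> (nat \<Rightarrow> tab) \<Rightarrow> lam \<Rightarrow> nat \<Rightarrow> lam" where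
  "lam_of Tp Tm l1 i = (\<lambda>j. l1 j + wtsum Tp Tm i j)"

definition alpha_of :: "(nat \<Rightarrow> tab) \<Rightarrow> (nat \<Rightarrow> tab) \<Rightarrow> lam \<Rightarrow> nat \<Rightarrow> lam" where
  "alpha_of Tp Tm l1 i = (\<lambda>j. l1 j - wt (Tp i) j + wtsum Tp Tm i j)"

definition S_set :: "nat \<Rightarrow> (nat \<Rightarrow> lam) \<Rightarrow> (nat \<Rightarrow> lam) \<Rightarrow> (nat \<Rightarrow> tab) \<Rightarrow> (nat \<Rightarrow> tab) \<Rightarrow> lam set" where
  "S_set k nup num Tp Tm = {l1 \<in> partitions.
     in_CLR_tuple k (lam_of Tp Tm l1) (alpha_of Tp Tm l1) nup num Tp Tm}"

definition S_plus :: "(nat \<Rightarrow> lam) \<Rightarrow> (nat \<Rightarrow> tab) \<Rightarrow> (nat \<Rightarrow> tab) \<Rightarrow> nat \<Rightarrow> lam" where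
  "S_plus nup Tp Tm i = (\<lambda>j. eps_vec (nup i) (Tp i) j + wt (Tp i) j - wtsum Tp Tm i j)"

definition S_minus :: "(nat \<Rightarrow> lam) \<Rightarrow> (nat \<Rightarrow> tab) \<Rightarrow> (nat \<Rightarrow> tab) \<Rightarrow> nat \<Rightarrow> lam" where
  "S_minus num Tp Tm i = (\<lambda>j. eps_vec (num i) (Tm i) j + wt (Tp i) j - wtsum Tp Tm i j)"

definition lam_min :: "nat \<Rightarrow> (nat \<Rightarrow> lam) \<Rightarrow> (nat \<Rightarrow> lam) \<Rightarrow> (nat \<Rightarrow> tab) \<Rightarrow> (nat \<Rightarrow> tab) \<Rightarrow> lam" where
  "lam_min k nup num Tp Tm = from_omc (\<lambda>c.
     Max ((\<lambda>i. omc (S_plus nup Tp Tm i) c) ` {1..k} \<union> (\<lambda>i. omc (S_minus num Tp Tm i) c) ` {1..k}))"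

end

theory Submission
  imports Defs
begin

text \<open>By the signature rule, eps_i(T) is the number of unmatched letters i+1 in the reading
  word of T; so it is at least #(i+1) - #i, and eps(T) + wt(T) has nonnegative omega-coordinates.
  Writing lambda_i and alpha_i in terms of lambda_1, the weight equations of the cyclic CLR product
  hold for every lambda_1 once the total weight of T vanishes, which T \<in> D(nu) forces; the
  conditions eps(T_i^\<plusminus>) \<le> alpha_i then become S_i^\<plusminus> \<le> lambda_1. Hence S_T is the set of
  partitions lying above lambda_min(T), and since lambda_min(T) \<ge> S_1^+ \<ge> 0 is itself a partition,
  this set is lambda_min(T) + P.\<close>

section \<open>Partitions and \<open>\<omega>\<close>-coordinates\<close>

lemma omc_from_omc:
  assumes "finite {i. c i \<noteq> 0}"
  shows "omc (from_omc c) j = c j"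
proof -
  have "finite {i. Suc j \<le> i \<and> c i \<noteq> 0}" by (rule finite_subset[OF _ assms]) auto
  moreover have "{i. j \<le> i \<and> c i \<noteq> 0} = (if c j = 0 then {i. Suc j \<le> i \<and> c i \<noteq> 0}
      else insert j {i. Suc j \<le> i \<and> c i \<noteq> 0})"
    by (auto simp: le_less Suc_le_eq)
  ultimately show ?thesis by (simp add: omc_def from_omc_def)
qed

lemma finsupp_from_omc:
  assumes "finite {i. c i \<noteq> 0}"
  shows "finsupp (from_omc c)"
  unfolding finsupp_def
proof (rule finite_subset)
  show "{j. from_omc c j \<noteq> 0} \<subseteq> (\<Union>i \<in> {i. c i \<noteq> 0}. {..i})"
  proof
    fix j
    assume "j \<in> {j. from_omc c j \<noteq> 0}"
    then have "from_omc c j \<noteq> 0" by simp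
    then have "{i. j \<le> i \<and> c i \<noteq> 0} \<noteq> {}" unfolding from_omc_def by (metis sum.empty)
    then show "j \<in> (\<Union>i \<in> {i. c i \<noteq> 0}. {..i})" by auto
  qed
qed (use assms in auto)

lemma omc_add: "omc (\<lambda>j. f j + g j) c = omc f c + omc g c"
  by (simp add: omc_def)

lemma omc_diff: "omc (\<lambda>j. f j - g j) c = omc f c - omc g c"
  by (simp add: omc_def)

lemma finsupp_add: "finsupp f \<Longrightarrow> finsupp g \<Longrightarrow> finsupp (\<lambda>j. f j + g j)"
  unfolding finsupp_def by (rule finite_subset[of _ "{j. f j \<noteq> 0} \<union> {j. g j \<noteq> 0}"]) auto

lemma finsupp_diff: "finsupp f \<Longrightarrow> finsupp g \<Longrightarrow> finsupp (\<lambda>j. f j - g j)"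
  unfolding finsupp_def by (rule finite_subset[of _ "{j. f j \<noteq> 0} \<union> {j. g j \<noteq> 0}"]) auto

lemma finite_omc_support:
  assumes "finsupp f"
  shows "finite {c. omc f c \<noteq> 0}"
proof (rule finite_subset)
  show "{c. omc f c \<noteq> 0} \<subseteq> {j. f j \<noteq> 0} \<union> Suc -` {j. f j \<noteq> 0}"
    by (auto simp: omc_def)
  have "finite {j. f j \<noteq> 0}" using assms by (simp add: finsupp_def)
  then show "finite ({j. f j \<noteq> 0} \<union> Suc -` {j. f j \<noteq> 0})"
    using finite_vimageI[of "{j. f j \<noteq> 0}" Suc] by (simp del: vimage_Collect_eq)
qed

lemma partitions_above_from_omc:
  assumes nonneg: "\<And>c. 0 \<le> M c" and fin: "finite {c. M c \<noteq> 0}"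
  shows "{l \<in> partitions. \<forall>c. M c \<le> omc l c} = {(\<lambda>j. from_omc M j + \<delta> j) | \<delta>. \<delta> \<in> partitions}"
proof (intro set_eqI iffI)
  fix l
  assume "l \<in> {l \<in> partitions. \<forall>c. M c \<le> omc l c}"
  then have l: "is_partition l" "\<forall>c. M c \<le> omc l c" by (auto simp: partitions_def)
  define \<delta> where "\<delta> = (\<lambda>j. l j - from_omc M j)"
  have "is_partition \<delta>"
    using l finsupp_diff[of l "from_omc M"] finsupp_from_omc[OF fin]
    by (simp add: is_partition_def \<delta>_def omc_diff omc_from_omc[OF fin])
  moreover have "l = (\<lambda>j. from_omc M j + \<delta> j)" by (simp add: \<delta>_def)
  ultimately show "l \<in> {(\<lambda>j. from_omc M j + \<delta> j) | \<delta>. \<delta> \<in> partitions}"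
    by (auto simp: partitions_def)
next
  fix l
  assume "l \<in> {(\<lambda>j. from_omc M j + \<delta> j) | \<delta>. \<delta> \<in> partitions}"
  then obtain \<delta> where \<delta>: "is_partition \<delta>" and l: "l = (\<lambda>j. from_omc M j + \<delta> j)"
    by (auto simp: partitions_def)
  have omc_l: "omc l c = M c + omc \<delta> c" for c
    by (simp add: l omc_add omc_from_omc[OF fin])
  have "is_partition l"
    using \<delta> nonneg finsupp_add[OF finsupp_from_omc[OF fin], of \<delta>]
    by (simp add: is_partition_def l[symmetric] omc_l)
  moreover have "\<forall>c. M c \<le> omc l c" using \<delta> by (simp add: omc_l is_partition_def)
  ultimately show "l \<in> {l \<in> partitions. \<forall>c. M c \<le> omc l c}" by (simp add: partitions_def)
qed

section \<open>The signature rule\<close>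

lemma unm_append: "unm i T (xs @ ys) st = unm i T ys (unm i T xs st)"
  by (induction xs arbitrary: st) auto

lemma set_unm_subset: "set (unm i T ps st) \<subseteq> {p \<in> set ps. T p = Suc i} \<union> set st"
proof (induction ps arbitrary: st)
  case Nil
  show ?case by simp
next
  case (Cons p ps)
  show ?case
    using Cons.IH[of "p # st"] Cons.IH[of "drop 1 st"] Cons.IH[of st] set_drop_subset[of 1 st]
    by auto
qed

lemma unm_cong: "(\<And>p. p \<in> set ps \<Longrightarrow> T p = T' p) \<Longrightarrow> unm i T ps st = unm i T' ps st"
  by (induction ps arbitrary: st) auto

lemma unm_stack_suffix: "\<exists>n. \<forall>st. unm i T ps st = unm i T ps [] @ drop n st"
proof (induction ps)
  case Nil
  show ?case by (auto intro: exI[of _ 0])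
next
  case (Cons p ps)
  then obtain n where n: "\<And>st. unm i T ps st = unm i T ps [] @ drop n st" by blast
  \<comment> \<open>a letter \<open>i+1\<close> cancels one pop from the initial stack, a letter \<open>i\<close> adds one\<close>
  have "unm i T (p # ps) st = unm i T (p # ps) []
      @ drop (if T p = Suc i then n - 1 else if T p = i then Suc n else n) st" for st
    using n[of "p # st"] n[of "[p]"] n[of "drop 1 st"] n[of "[]"] n[of st]
    by (cases n) (auto simp: drop_Suc)
  then show ?case by blast
qed

lemma length_unm_ge:
  "int (length st) + int (length (filter (\<lambda>p. T p = Suc i) ps))
     - int (length (filter (\<lambda>p. T p = i) ps)) \<le> int (length (unm i T ps st))"
proof (induction ps arbitrary: st)
  case Nil
  show ?case by simp
next
  case (Cons p ps)
  show ?case using Cons.IH[of "p # st"] Cons.IH[of "drop 1 st"] Cons.IH[of st] by auto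
qed

lemma unm_last_decomposition:
  assumes "distinct w" and "unm i T w [] \<noteq> []"
  defines "q \<equiv> last (unm i T w [])"
  obtains pre post where "w = pre @ q # post" and "q \<notin> set pre" and "q \<notin> set post"
    and "unm i T pre [] = []" and "unm i T w [] = unm i T post [] @ [q]"
proof -
  have q: "q \<in> set (unm i T w [])" using assms(2) q_def by simp
  then have "q \<in> set w" and Tq: "T q = Suc i" using set_unm_subset[of i T w "[]"] by auto
  then obtain pre post where w: "w = pre @ q # post" by (metis split_list)
  with assms(1) have q_pre: "q \<notin> set pre" and q_post: "q \<notin> set post" by auto
  define s0 where "s0 = unm i T pre []"
  obtain n where n: "\<And>st. unm i T post st = unm i T post [] @ drop n st"
    using unm_stack_suffix by blast
  have st: "unm i T w [] = unm i T post [] @ drop n (q # s0)"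
    using n[of "q # s0"] Tq by (simp add: w unm_append s0_def)
  have "q \<notin> set (unm i T post [])" using set_unm_subset[of i T post "[]"] q_post by auto
  then have nonempty: "drop n (q # s0) \<noteq> []" using st q by auto
  have "q = last (unm i T w [])" by (simp only: q_def)
  also have "\<dots> = last (drop n (q # s0))" by (simp only: st last_appendR[OF nonempty])
  also have "\<dots> = last (q # s0)" using nonempty by simp
  finally have "q = last (q # s0)" .
  \<comment> \<open>the bottom unmatched letter must have been pushed onto an empty stack\<close>
  moreover have "q \<notin> set s0" using set_unm_subset[of i T pre "[]"] q_pre s0_def by auto
  ultimately have "s0 = []" by (cases "s0 = []") auto
  with nonempty have "n = 0" by (cases n) auto
  show thesis
    by (rule that[OF w q_pre q_post]) (use st \<open>s0 = []\<close> \<open>n = 0\<close> s0_def in auto)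
qed

definition n_unmatched :: "lam \<Rightarrow> nat \<Rightarrow> tab \<Rightarrow> nat" where
  "n_unmatched nu i T = length (unm i T (read_cells nu) [])"

lemma distinct_read_cells: "distinct (read_cells nu)"
proof -
  have "distinct (concat (map (\<lambda>r. map (\<lambda>c. (r, c)) (g r)) rs))"
    if "distinct rs" and "\<forall>r. distinct (g r)" for rs and g :: "nat \<Rightarrow> nat list"
    using that by (induction rs) (auto simp: distinct_map inj_on_def)
  then show ?thesis unfolding read_cells_def by simp
qed

lemma e_op_eq_None_iff: "e_op nu i T = None \<longleftrightarrow> n_unmatched nu i T = 0"
  unfolding e_op_def n_unmatched_def Let_def by auto

lemma n_unmatched_e_op:
  assumes "e_op nu i T = Some T'"
  shows "n_unmatched nu i T' = n_unmatched nu i T - 1"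
proof -
  define w where "w = read_cells nu"
  define q where "q = last (unm i T w [])"
  have ne: "unm i T w [] \<noteq> []" and T': "T' = T(q := i)"
    using assms unfolding e_op_def w_def q_def Let_def by (auto split: if_splits)
  obtain pre post where w: "w = pre @ q # post" and q_pre: "q \<notin> set pre"
    and q_post: "q \<notin> set post" and pre: "unm i T pre [] = []"
    and st: "unm i T w [] = unm i T post [] @ [q]"
    by (rule unm_last_decomposition[OF _ ne, folded q_def]) (auto simp: w_def distinct_read_cells)
  have "unm i T' pre [] = unm i T pre []" by (rule unm_cong) (use q_pre T' in auto)
  moreover have "unm i T' post [] = unm i T post []" by (rule unm_cong) (use q_post T' in auto)
  moreover have "unm i T' w [] = unm i T' post (drop 1 (unm i T' pre []))"
    unfolding w by (simp add: unm_append T')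
  ultimately have "unm i T' w [] = unm i T post []" using pre by simp
  then show ?thesis using arg_cong[OF st, of length] unfolding n_unmatched_def w_def by simp
qed

lemma e_pow_Some:
  "m \<le> n_unmatched nu i T \<Longrightarrow>
     \<exists>T'. e_pow nu i m T = Some T' \<and> n_unmatched nu i T' = n_unmatched nu i T - m"
proof (induction m)
  case 0
  show ?case by simp
next
  case (Suc m)
  then obtain T' where T': "e_pow nu i m T = Some T'" "n_unmatched nu i T' = n_unmatched nu i T - m"
    by auto
  with Suc.prems obtain T'' where "e_op nu i T' = Some T''"
    by (cases "e_op nu i T'") (auto simp: e_op_eq_None_iff)
  then show ?case using T' n_unmatched_e_op by auto
qed

lemma e_pow_None: "n_unmatched nu i T < m \<Longrightarrow> e_pow nu i m T = None"
proof (induction m)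
  case 0
  then show ?case by simp
next
  case (Suc m)
  show ?case
  proof (cases "n_unmatched nu i T < m")
    case True
    then show ?thesis using Suc.IH by simp
  next
    case False
    with Suc.prems obtain T' where "e_pow nu i m T = Some T'" "n_unmatched nu i T' = 0"
      using e_pow_Some[of m nu i T] by auto
    then show ?thesis by (simp add: e_op_eq_None_iff)
  qed
qed

lemma eps_i_eq_n_unmatched: "eps_i nu i T = n_unmatched nu i T"
  unfolding eps_i_def
proof (rule Greatest_equality)
  show "e_pow nu i (n_unmatched nu i T) T \<noteq> None"
    using e_pow_Some[of "n_unmatched nu i T" nu i T] by auto
next
  show "m \<le> n_unmatched nu i T" if "e_pow nu i m T \<noteq> None" for m
    using that e_pow_None[of nu i T m] by linarith
qed

lemma n_unmatched_pos_imp_entry: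
  "0 < n_unmatched nu i T \<Longrightarrow> \<exists>p \<in> set (read_cells nu). T p = Suc i"
  using set_unm_subset[of i T "read_cells nu" "[]"] unfolding n_unmatched_def
  by (cases "unm i T (read_cells nu) []") auto

lemma finite_eps_i_support: "finite {k. eps_i nu (Suc k) T \<noteq> 0}"
proof (rule finite_subset)
  show "{k. eps_i nu (Suc k) T \<noteq> 0} \<subseteq> (\<lambda>p. T p - 2) ` set (read_cells nu)"
  proof
    fix k
    assume "k \<in> {k. eps_i nu (Suc k) T \<noteq> 0}"
    then obtain p where "p \<in> set (read_cells nu)" and "T p = Suc (Suc k)"
      using n_unmatched_pos_imp_entry[of nu "Suc k" T] by (auto simp: eps_i_eq_n_unmatched)
    then show "k \<in> (\<lambda>p. T p - 2) ` set (read_cells nu)" by (intro image_eqI[where x = p]) simp_all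
  qed
qed simp

lemma omc_eps_vec: "omc (eps_vec nu T) k = int (eps_i nu (Suc k) T)"
  unfolding eps_vec_def by (rule omc_from_omc) (use finite_eps_i_support in simp)

lemma row_lt_nrows:
  assumes "finsupp nu" and "in_shape nu (r, c)"
  shows "r < nrows nu"
proof -
  have fin: "finite {j. nu j \<noteq> 0}" using assms(1) by (simp add: finsupp_def)
  define N where "N = Suc (Max {j. nu j \<noteq> 0})"
  have "nu j \<le> 0" if "N \<le> j" for j
  proof (rule ccontr)
    assume "\<not> nu j \<le> 0"
    then have "j \<le> Max {j. nu j \<noteq> 0}" using fin by (simp add: Max_ge)
    then show False using that by (simp add: N_def)
  qed
  then have bound: "\<forall>r\<ge>nrows nu. nu r \<le> 0"
    unfolding nrows_def by (intro LeastI[of "\<lambda>n. \<forall>r\<ge>n. nu r \<le> 0" N]) simp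
  show ?thesis
  proof (rule ccontr)
    assume "\<not> r < nrows nu"
    then have "nu r \<le> 0" using bound by simp
    with assms(2) show False unfolding in_shape_def by simp
  qed
qed
lemma set_read_cells:
  assumes "finsupp nu"
  shows "set (read_cells nu) = {p. in_shape nu p}"
proof -
  have "(r, c) \<in> set (read_cells nu)" if "in_shape nu (r, c)" for r c
    using that row_lt_nrows[OF assms that]
    by (auto simp: read_cells_def in_shape_def intro!: bexI[where x = r])
  then show ?thesis by (auto simp: read_cells_def in_shape_def)
qed

lemma SST_nonzero_in_shape: "T \<in> SST nu \<Longrightarrow> T p \<noteq> 0 \<Longrightarrow> in_shape nu p"
  unfolding SST_def by (metis (mono_tags, lifting) mem_Collect_eq)

lemma card_entries_eq_length_filter:
  assumes "T \<in> SST nu" and "finsupp nu" and "v \<noteq> 0"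
  shows "card {p. T p = v} = length (filter (\<lambda>p. T p = v) (read_cells nu))"
proof -
  have "{p. T p = v} = set (filter (\<lambda>p. T p = v) (read_cells nu))"
    using assms SST_nonzero_in_shape by (auto simp: set_read_cells)
  then have "card {p. T p = v} = card (set (filter (\<lambda>p. T p = v) (read_cells nu)))" by simp
  also have "\<dots> = length (filter (\<lambda>p. T p = v) (read_cells nu))"
    by (rule distinct_card[OF distinct_filter[OF distinct_read_cells]])
  finally show ?thesis .
qed

lemma omc_eps_vec_plus_wt_nonneg:
  assumes "T \<in> SST nu" and "finsupp nu"
  shows "0 \<le> omc (eps_vec nu T) k + omc (wt T) k"
proof -
  have "omc (wt T) k = int (card {p. T p = Suc k}) - int (card {p. T p = Suc (Suc k)})"
    by (simp add: omc_def wt_def)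
  moreover have "omc (eps_vec nu T) k = int (length (unm (Suc k) T (read_cells nu) []))"
    by (simp add: omc_eps_vec eps_i_eq_n_unmatched n_unmatched_def)
  ultimately show ?thesis
    using length_unm_ge[of "[]" T "Suc k" "read_cells nu"]
      card_entries_eq_length_filter[OF assms, of "Suc k"]
      card_entries_eq_length_filter[OF assms, of "Suc (Suc k)"]
    by linarith
qed

section \<open>The cyclic product of \<open>CLR\<close> sets\<close>

lemma CLR_iff:
  "T \<in> CLR lambda alpha nu \<longleftrightarrow>
     T \<in> SST nu \<and> (\<forall>c. omc (eps_vec nu T) c \<le> omc alpha c) \<and> (\<forall>j. lambda j = alpha j + wt T j)"
  unfolding CLR_def lam_le_def by auto

lemma prv_mem: "i \<in> {1..k} \<Longrightarrow> prv k i \<in> {1..k}"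
  by (auto simp: prv_def)

lemma wtsum_Suc_0: "wtsum Tp Tm (Suc 0) j = 0"
  by (simp add: wtsum_def)

lemma wtsum_Suc: "1 \<le> i \<Longrightarrow> wtsum Tp Tm (Suc i) j = wtsum Tp Tm i j + wtT Tp Tm (Suc i) j"
  by (simp add: wtsum_def atLeastAtMostSuc_conv add.commute)

lemma in_CLR_tuple_weights:
  assumes "in_CLR_tuple k lambda alpha nup num Tp Tm" and "i \<in> {1..k}"
  shows "lambda i j = alpha i j + wt (Tp i) j" and "lambda (prv k i) j = alpha i j + wt (Tm i) j"
  using assms unfolding in_CLR_tuple_def CLR_iff by auto

lemma in_CLR_tuple_SST:
  assumes "in_CLR_tuple k lambda alpha nup num Tp Tm" and "i \<in> {1..k}"
  shows "Tp i \<in> SST (nup i)" and "Tm i \<in> SST (num i)"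
  using assms unfolding in_CLR_tuple_def CLR_def by auto

lemma in_CLR_tuple_lambda_eq:
  assumes tuple: "in_CLR_tuple k lambda alpha nup num Tp Tm" and "i \<in> {1..k}"
  shows "lambda i = lam_of Tp Tm (lambda 1) i"
  using assms(2)
proof (induction i)
  case 0
  then show ?case by simp
next
  case (Suc i)
  show ?case
  proof (cases "i = 0")
    case True
    then show ?thesis by (simp add: lam_of_def wtsum_Suc_0)
  next
    case False
    then have prv: "prv k (Suc i) = i" by (simp add: prv_def)
    have "lambda (Suc i) j = lambda i j + wtT Tp Tm (Suc i) j" for j
      using in_CLR_tuple_weights[OF tuple Suc.prems, of j] prv by (simp add: wtT_def)
    then show ?thesis
      using Suc False by (auto simp: lam_of_def wtsum_Suc)
  qed
qed

lemma in_CLR_tuple_alpha_eq: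
  assumes tuple: "in_CLR_tuple k lambda alpha nup num Tp Tm" and i: "i \<in> {1..k}"
  shows "alpha i = alpha_of Tp Tm (lambda 1) i"
proof
  fix j
  note in_CLR_tuple_weights(1)[OF assms, of j]
  moreover have "lambda i j = lambda 1 j + wtsum Tp Tm i j"
    using in_CLR_tuple_lambda_eq[OF assms] by (simp add: lam_of_def)
  ultimately show "alpha i j = alpha_of Tp Tm (lambda 1) i j" by (simp add: alpha_of_def)
qed

lemma in_CLR_tuple_wtsum_total:
  assumes k: "1 \<le> k" and tuple: "in_CLR_tuple k lambda alpha nup num Tp Tm"
  shows "wtsum Tp Tm k j = wt (Tm 1) j - wt (Tp 1) j"
proof -
  have "1 \<in> {1..k}" and "prv k 1 = k" using k by (auto simp: prv_def)
  then have "lambda 1 j = alpha 1 j + wt (Tp 1) j" and "lambda k j = alpha 1 j + wt (Tm 1) j"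
    using in_CLR_tuple_weights[OF tuple, of 1 j] by simp_all
  moreover have "lambda k j = lambda 1 j + wtsum Tp Tm k j"
    using in_CLR_tuple_lambda_eq[OF tuple, of k] k by (simp add: lam_of_def)
  ultimately show ?thesis by simp
qed

lemma in_CLR_tuple_lam_of:
  assumes "in_CLR_tuple k lambda alpha nup num Tp Tm"
  shows "in_CLR_tuple k (lam_of Tp Tm (lambda 1)) (alpha_of Tp Tm (lambda 1)) nup num Tp Tm"
  using assms in_CLR_tuple_lambda_eq[OF assms] in_CLR_tuple_alpha_eq[OF assms] prv_mem
  unfolding in_CLR_tuple_def by metis

lemma lam_of_prv:
  assumes total: "\<And>j. wtsum Tp Tm k j = wt (Tm 1) j - wt (Tp 1) j" and i: "i \<in> {1..k}"
  shows "lam_of Tp Tm l1 (prv k i) j = alpha_of Tp Tm l1 i j + wt (Tm i) j"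
proof (cases "i = 1")
  case True
  then show ?thesis using total[of j] by (simp add: lam_of_def alpha_of_def prv_def wtsum_Suc_0)
next
  case False
  then obtain i' where "i = Suc i'" and "1 \<le> i'" using i by (cases i) auto
  then show ?thesis by (simp add: lam_of_def alpha_of_def prv_def wtsum_Suc wtT_def)
qed

lemma in_CLR_tuple_lam_of_iff:
  assumes SST: "\<forall>i\<in>{1..k}. Tp i \<in> SST (nup i) \<and> Tm i \<in> SST (num i)"
    and total: "\<And>j. wtsum Tp Tm k j = wt (Tm 1) j - wt (Tp 1) j"
  shows "in_CLR_tuple k (lam_of Tp Tm l1) (alpha_of Tp Tm l1) nup num Tp Tm \<longleftrightarrow>
    (\<forall>i\<in>{1..k}. \<forall>c. omc (S_plus nup Tp Tm i) c \<le> omc l1 c \<and> omc (S_minus num Tp Tm i) c \<le> omc l1 c)"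
proof -
  have "\<forall>j. lam_of Tp Tm l1 i j = alpha_of Tp Tm l1 i j + wt (Tp i) j" for i
    by (simp add: lam_of_def alpha_of_def)
  moreover have "\<forall>j. lam_of Tp Tm l1 (prv k i) j = alpha_of Tp Tm l1 i j + wt (Tm i) j"
    if "i \<in> {1..k}" for i
    using lam_of_prv[OF total that] by blast
  moreover have "omc (eps_vec (nup i) (Tp i)) c \<le> omc (alpha_of Tp Tm l1 i) c \<longleftrightarrow>
      omc (S_plus nup Tp Tm i) c \<le> omc l1 c" for i c
    unfolding omc_def alpha_of_def S_plus_def by linarith
  moreover have "omc (eps_vec (num i) (Tm i)) c \<le> omc (alpha_of Tp Tm l1 i) c \<longleftrightarrow>
      omc (S_minus num Tp Tm i) c \<le> omc l1 c" for i c
    unfolding omc_def alpha_of_def S_minus_def by linarith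
  ultimately show ?thesis
    using SST unfolding in_CLR_tuple_def CLR_iff by blast
qed

definition lam_min_omc ::
    "nat \<Rightarrow> (nat \<Rightarrow> lam) \<Rightarrow> (nat \<Rightarrow> lam) \<Rightarrow> (nat \<Rightarrow> tab) \<Rightarrow> (nat \<Rightarrow> tab) \<Rightarrow> nat \<Rightarrow> int"
  where "lam_min_omc k nup num Tp Tm c = Max ((\<lambda>i. omc (S_plus nup Tp Tm i) c) ` {1..k}
     \<union> (\<lambda>i. omc (S_minus num Tp Tm i) c) ` {1..k})"

lemma lam_min_eq_from_omc: "lam_min k nup num Tp Tm = from_omc (lam_min_omc k nup num Tp Tm)"
  unfolding lam_min_def lam_min_omc_def ..

lemma lam_min_omc_le_iff:
  assumes "1 \<le> k"
  shows "lam_min_omc k nup num Tp Tm c \<le> x \<longleftrightarrow>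
    (\<forall>i\<in>{1..k}. omc (S_plus nup Tp Tm i) c \<le> x \<and> omc (S_minus num Tp Tm i) c \<le> x)"
  using assms unfolding lam_min_omc_def by (subst Max_le_iff) auto

lemma lam_min_omc_nonneg:
  assumes "1 \<le> k" and "Tp 1 \<in> SST (nup 1)" and "finsupp (nup 1)"
  shows "0 \<le> lam_min_omc k nup num Tp Tm c"
proof -
  have "omc (S_plus nup Tp Tm 1) c = omc (eps_vec (nup 1) (Tp 1)) c + omc (wt (Tp 1)) c"
    by (simp add: omc_def S_plus_def wtsum_Suc_0)
  then have "0 \<le> omc (S_plus nup Tp Tm 1) c"
    using omc_eps_vec_plus_wt_nonneg[OF assms(2,3)] by simp
  moreover have "omc (S_plus nup Tp Tm 1) c \<le> lam_min_omc k nup num Tp Tm c"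
    using lam_min_omc_le_iff[OF assms(1), of nup num Tp Tm c "lam_min_omc k nup num Tp Tm c"]
      assms(1) by auto
  ultimately show ?thesis by (rule order_trans)
qed

lemma S_set_eq_partitions_above:
  assumes "1 \<le> k" and tuple: "in_CLR_tuple k lambda alpha nup num Tp Tm"
  shows "S_set k nup num Tp Tm = {l \<in> partitions. \<forall>c. lam_min_omc k nup num Tp Tm c \<le> omc l c}"
proof -
  have "\<forall>i\<in>{1..k}. Tp i \<in> SST (nup i) \<and> Tm i \<in> SST (num i)"
    using in_CLR_tuple_SST[OF tuple] by blast
  from in_CLR_tuple_lam_of_iff[OF this in_CLR_tuple_wtsum_total[OF assms]] show ?thesis
    unfolding S_set_def lam_min_omc_le_iff[OF assms(1)] by blast
qed

theorem mainTheorem10: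
  fixes k :: nat and nup num :: "nat \<Rightarrow> lam" and Tp Tm :: "nat \<Rightarrow> tab"
  assumes "1 \<le> k"
    and "\<forall>i\<in>{1..k}. is_partition (nup i) \<and> is_partition (num i)"
    and "in_D k nup num Tp Tm"
  shows "S_set k nup num Tp Tm
           = {(\<lambda>j. lam_min k nup num Tp Tm j + \<delta> j) | \<delta>. \<delta> \<in> partitions}"
proof -
  obtain lambda alpha where lambda_alpha: "\<forall>i\<in>{1..k}. is_partition (lambda i) \<and> is_partition (alpha i)"
    and tuple: "in_CLR_tuple k lambda alpha nup num Tp Tm"
    using assms(3) unfolding in_D_def by blast
  let ?M = "lam_min_omc k nup num Tp Tm"
  have one: "1 \<in> {1..k}" using assms(1) by simp
  have nonneg: "0 \<le> ?M c" for c
    using lam_min_omc_nonneg[of k Tp nup num Tm c, OF assms(1) in_CLR_tuple_SST(1)[OF tuple one]]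
      assms(2) one
    by (simp add: is_partition_def)
  have "lambda 1 \<in> S_set k nup num Tp Tm"
    using in_CLR_tuple_lam_of[OF tuple] lambda_alpha one by (simp add: S_set_def partitions_def)
  then have below: "?M c \<le> omc (lambda 1) c" for c
    by (simp add: S_set_eq_partitions_above[OF assms(1) tuple])
  have "?M c = 0" if "omc (lambda 1) c = 0" for c
    using nonneg[of c] below[of c] that by linarith
  then have "{c. ?M c \<noteq> 0} \<subseteq> {c. omc (lambda 1) c \<noteq> 0}" by blast
  moreover have "finite {c. omc (lambda 1) c \<noteq> 0}"
    using lambda_alpha one finite_omc_support by (simp add: is_partition_def)
  ultimately have "finite {c. ?M c \<noteq> 0}" by (rule finite_subset)
  then show ?thesis
    unfolding S_set_eq_partitions_above[OF assms(1) tuple] lam_min_eq_from_omc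
    by (rule partitions_above_from_omc[OF nonneg])
qed

end
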